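(* Let $H$ be a non-total attractor hull of a $k$-oriented Spherical Diagram $\mathcal D$, and let $x$ be a point of intersection between an arc of $\mathcal D$ and the interior of $H$. Then there are three distinct arcs of $\mathcal D$ that thrust the boundary of $H$ at three distinct points, not all lying on the same edge of $H$, each of which is internally $H$-connected (with respect to $\mathcal D$) with $x$.
   Context: A geodesic arc on the unit sphere in $\mathbb R^3$ is the unique shortest curve joining two non-antipodal points. An arc $a$ blocks an arc $b$ (equivalently, $b$ hits $a$) if an endpoint of $b$ lies in the relative interior of $a$. A Spherical Diagram (SD) is a finite non-empty collection $\mathcal D$ of pairwise interior-disjoint geodesic arcs on the unit sphere such that each arc of $\mathcal D$ is blocked by arcs of $\mathcal D$ at each of its endpoints. An SD $\mathcal D$ is $k$-oriented if there exist a set $P$ of $k$ points on the unit sphere (poles), no two antipodal, and a function $f\colon\mathcal D\to P$ such that each arc $a\in\mathcal D$ lies on a great circle through $f(a)$ but contains neither $f(a)$ nor its antipode $-f(a)$ (the anti-pole of $f(a)$). An attractor of a $k$-oriented SD is a set of $k$ points, no two antipodal, chosen among its poles and anti-poles. An attractor hull is the spherical convex hull of an attractor; it is total if it is the whole sphere (otherwise it is a spherical polygon contained in the interior of a hemisphere). For a spherical polygon $R$ contained in the interior of a hemisphere, an arc $a$ thrusts the boundary of $R$ at a point $y$ if $y\in a\cap\partial R$ and $a$ also intersects the interior of $R$. For a region $R$, two points are internally $R$-connected (with respect to $\mathcal D$) if there is a path between them contained in the union of the arcs of $\mathcal D$, all of whose points except possibly its endpoints lie in the interior of $R$. *)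

theory Defs
  imports "HOL-Analysis.Analysis"
begin

definition S2 :: "(real^3) set" where
  "S2 = sphere 0 1"

text \<open>A geodesic arc is represented by the pair of its endpoints (p, q): two distinct,
non-antipodal points of the unit sphere.\<close>
type_synonym arc = "(real^3) \<times> (real^3)"

definition valid_arc :: "arc \<Rightarrow> bool" where
  "valid_arc a \<longleftrightarrow> fst a \<in> S2 \<and> snd a \<in> S2 \<and> fst a \<noteq> snd a \<and> snd a \<noteq> - fst a"

definition arc_set :: "arc \<Rightarrow> (real^3) set" where
  "arc_set a = (\<lambda>v. v /\<^sub>R norm v) ` closed_segment (fst a) (snd a)"

definition arc_relint :: "arc \<Rightarrow> (real^3) set" where
  "arc_relint a = (\<lambda>v. v /\<^sub>R norm v) ` open_segment (fst a) (snd a)"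

definition blocks :: "arc \<Rightarrow> arc \<Rightarrow> bool" where
  "blocks a b \<longleftrightarrow> fst b \<in> arc_relint a \<or> snd b \<in> arc_relint a"

definition spherical_diagram :: "arc set \<Rightarrow> bool" where
  "spherical_diagram D \<longleftrightarrow>
     finite D \<and> D \<noteq> {} \<and> (\<forall>a\<in>D. valid_arc a) \<and>
     (\<forall>a\<in>D. \<forall>b\<in>D. a \<noteq> b \<longrightarrow> arc_relint a \<inter> arc_relint b = {}) \<and>
     (\<forall>b\<in>D. (\<exists>a\<in>D. fst b \<in> arc_relint a) \<and> (\<exists>a\<in>D. snd b \<in> arc_relint a))"

definition k_oriented_by :: "nat \<Rightarrow> arc set \<Rightarrow> (real^3) set \<Rightarrow> (arc \<Rightarrow> real^3) \<Rightarrow> bool" where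
  "k_oriented_by k D P f \<longleftrightarrow>
     spherical_diagram D \<and> P \<subseteq> S2 \<and> finite P \<and> card P = k \<and> (\<forall>p\<in>P. - p \<notin> P) \<and>
     (\<forall>a\<in>D. f a \<in> P \<and>
        (\<exists>u. u \<noteq> 0 \<and> inner u (f a) = 0 \<and> (\<forall>z\<in>arc_set a. inner u z = 0)) \<and>
        f a \<notin> arc_set a \<and> - f a \<notin> arc_set a)"

definition attractor :: "nat \<Rightarrow> (real^3) set \<Rightarrow> (real^3) set \<Rightarrow> bool" where
  "attractor k P A \<longleftrightarrow> A \<subseteq> P \<union> uminus ` P \<and> finite A \<and> card A = k \<and> (\<forall>a\<in>A. - a \<notin> A)"

text \<open>Spherical convex hull: the trace on the sphere of the convex cone generated by A
when A lies in an open hemisphere; otherwise (convention) the whole sphere.\<close>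
definition sph_hull :: "(real^3) set \<Rightarrow> (real^3) set" where
  "sph_hull A = (if \<exists>u. \<forall>a\<in>A. inner u a > 0
                 then S2 \<inter> {c *\<^sub>R v | c v. c \<ge> 0 \<and> v \<in> convex hull A}
                 else S2)"

definition sph_interior :: "(real^3) set \<Rightarrow> (real^3) set" where
  "sph_interior R = {y \<in> R. \<exists>e>0. \<forall>z\<in>S2. dist z y < e \<longrightarrow> z \<in> R}"

definition sph_boundary :: "(real^3) set \<Rightarrow> (real^3) set" where
  "sph_boundary R = closure R - sph_interior R"

definition thrusts :: "arc \<Rightarrow> (real^3) set \<Rightarrow> real^3 \<Rightarrow> bool" where
  "thrusts a R y \<longleftrightarrow> y \<in> arc_set a \<and> y \<in> sph_boundary R \<and> arc_set a \<inter> sph_interior R \<noteq> {}"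

definition sph_edge :: "(real^3) set \<Rightarrow> (real^3) set \<Rightarrow> bool" where
  "sph_edge R E \<longleftrightarrow> (\<exists>u. u \<noteq> 0 \<and> (\<forall>z\<in>R. inner u z \<ge> 0) \<and> E = {z\<in>R. inner u z = 0}
                        \<and> (\<exists>z1\<in>E. \<exists>z2\<in>E. z1 \<noteq> z2))"

definition int_connected :: "arc set \<Rightarrow> (real^3) set \<Rightarrow> real^3 \<Rightarrow> real^3 \<Rightarrow> bool" where
  "int_connected D R x y \<longleftrightarrow>
     (\<exists>g. path g \<and> pathstart g = x \<and> pathfinish g = y \<and>
          path_image g \<subseteq> \<Union>(arc_set ` D) \<and> (\<forall>t\<in>{0<..<1}. g t \<in> sph_interior R))"

end

theory Submission
  imports Defs
begin

text \<open>Let \<open>K\<close> be the convex cone spanned by the attractor \<open>A\<close>. As the hull is not total, some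
  \<open>u0\<close> is positive on \<open>A\<close>, and the central projection \<open>v \<mapsto> v / (u0 \<bullet> v)\<close> onto the plane
  \<open>u0 \<bullet> v = 1\<close> turns arcs into straight segments. Fix a generic linear functional \<open>w\<close> on that
  plane and follow the diagram from \<open>x\<close> inside the hull: the highest reachable point in direction
  \<open>w\<close> cannot be interior, since an interior maximum on an arc is an endpoint, which is blocked by
  an arc along which \<open>w\<close> still increases. So every generic \<open>w\<close> yields a thrust point internally
  connected with \<open>x\<close> and at least as high as any given reachable point. A \<open>w\<close> separating \<open>x\<close>
  from a first thrust point \<open>y1\<close> gives a second one \<open>y2\<close>; the reachable part of the diagram is not
  contained in the great circle through \<open>y1\<close> and \<open>y2\<close>, so a \<open>w\<close> close to its normal gives a third
  thrust point off that circle, and no edge contains all three. The three arcs are distinct because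
  an arc crossing the interior thrusts the boundary only once: two boundary points would force the
  pole (or anti-pole) of the arc that lies in \<open>A\<close>, hence in \<open>K\<close> and on the arc's great circle,
  onto the arc itself.\<close>

unbundle cross3_syntax

lemma mem_S2_iff: "z \<in> S2 \<longleftrightarrow> norm z = 1"
  by (simp add: S2_def)

lemma scaleR_norm_sgn [simp]: "norm v *\<^sub>R sgn v = v" for v :: "'a::real_normed_vector"
  by (cases "v = 0") (simp_all add: sgn_div_norm)

definition chord :: "arc \<Rightarrow> real \<Rightarrow> real^3" where
  "chord a t = (1 - t) *\<^sub>R fst a + t *\<^sub>R snd a"

lemma arc_set_chord: "arc_set a = (\<lambda>t. sgn (chord a t)) ` {0..1}"
  unfolding arc_set_def closed_segment_image_interval chord_def
  by (simp add: image_image sgn_div_norm)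

lemma arc_relint_chord: "fst a \<noteq> snd a \<Longrightarrow> arc_relint a = (\<lambda>t. sgn (chord a t)) ` {0<..<1}"
  unfolding arc_relint_def open_segment_image_interval chord_def
  by (simp add: image_image sgn_div_norm)

lemma chord_0 [simp]: "chord a 0 = fst a" and chord_1 [simp]: "chord a 1 = snd a"
  by (simp_all add: chord_def)

lemma chord_convex_combination:
  "chord a ((1 - s) * t1 + s * t2) = (1 - s) *\<^sub>R chord a t1 + s *\<^sub>R chord a t2"
  unfolding chord_def by (simp add: algebra_simps)

lemma cross_chord: "chord a s \<times> chord a t = (t - s) *\<^sub>R (fst a \<times> snd a)"
  unfolding chord_def by (simp add: cross3_simps)

lemma isCont_chord: "isCont (chord a) t"
  unfolding chord_def[abs_def] by (intro continuous_intros)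

lemma cross_nonzero_if_unit:
  fixes p q :: "real^3"
  assumes "norm p = 1" "norm q = 1" "p \<noteq> q" "q \<noteq> - p"
  shows "p \<times> q \<noteq> 0"
proof
  assume "p \<times> q = 0"
  then obtain c where "q = c *\<^sub>R p"
    using assms(1,2) by (auto simp: cross_eq_0 collinear_lemma)
  then have "\<bar>c\<bar> = 1" using assms(1,2) by simp
  then show False using assms(3,4) \<open>q = c *\<^sub>R p\<close> by (auto simp: abs_if split: if_splits)
qed

lemma valid_arc_cross_nonzero: "valid_arc a \<Longrightarrow> fst a \<times> snd a \<noteq> 0"
  by (intro cross_nonzero_if_unit) (auto simp: valid_arc_def mem_S2_iff)

lemma chord_nonzero:
  assumes "valid_arc a" shows "chord a t \<noteq> 0"
proof
  assume "chord a t = 0"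
  then have "(t - 1) *\<^sub>R (fst a \<times> snd a) = 0" using cross_chord[of a 1 t] by simp
  then have "t = 1" using valid_arc_cross_nonzero[OF assms] by simp
  then show False using \<open>chord a t = 0\<close> assms by (simp add: valid_arc_def mem_S2_iff)
qed

lemma sgn_chord_inj:
  assumes "valid_arc a" "sgn (chord a s) = sgn (chord a t)"
  shows "s = t"
proof -
  have "chord a s \<times> chord a t
      = (norm (chord a s) * norm (chord a t)) *\<^sub>R (sgn (chord a s) \<times> sgn (chord a t))"
    by (metis cross_mult_left cross_mult_right scaleR_norm_sgn scaleR_scaleR)
  then have "chord a s \<times> chord a t = 0" using assms(2) by simp
  then show ?thesis using cross_chord[of a s t] valid_arc_cross_nonzero[OF assms(1)] by simp
qed

lemma sgn_arc_endpoints [simp]: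
  assumes "valid_arc a" shows "sgn (fst a) = fst a" "sgn (snd a) = snd a"
  using assms by (simp_all add: valid_arc_def mem_S2_iff sgn_div_norm)

lemma triple_product_eq_0:
  fixes p q c u :: "real^3"
  assumes "u \<noteq> 0" "u \<bullet> p = 0" "u \<bullet> q = 0" "u \<bullet> c = 0"
  shows "(p \<times> q) \<bullet> c = 0"
proof -
  have "((p \<times> q) \<bullet> c) *\<^sub>R u = (u \<bullet> p) *\<^sub>R (q \<times> c) + (u \<bullet> q) *\<^sub>R (c \<times> p) + (u \<bullet> c) *\<^sub>R (p \<times> q)"
    by (simp add: cross3_simps forall_3)
  then show ?thesis using assms by simp
qed

lemma in_span_if_orthogonal_cross:
  fixes p q c :: "real^3"
  assumes "p \<times> q \<noteq> 0" "(p \<times> q) \<bullet> c = 0"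
  shows "\<exists>\<alpha> \<beta>. c = \<alpha> *\<^sub>R p + \<beta> *\<^sub>R q"
proof -
  let ?n = "p \<times> q"
  have "(?n \<bullet> ?n) *\<^sub>R c = ((c \<times> q) \<bullet> ?n) *\<^sub>R p + ((p \<times> c) \<bullet> ?n) *\<^sub>R q + (?n \<bullet> c) *\<^sub>R ?n"
    by (simp add: cross3_simps forall_3)
  then have decomp: "(?n \<bullet> ?n) *\<^sub>R c = ((c \<times> q) \<bullet> ?n) *\<^sub>R p + ((p \<times> c) \<bullet> ?n) *\<^sub>R q"
    using assms(2) by simp
  have "c = inverse (?n \<bullet> ?n) *\<^sub>R ((?n \<bullet> ?n) *\<^sub>R c)"
    using assms(1) by simp
  also have "\<dots> = (((c \<times> q) \<bullet> ?n) / (?n \<bullet> ?n)) *\<^sub>R p + (((p \<times> c) \<bullet> ?n) / (?n \<bullet> ?n)) *\<^sub>R q"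
    unfolding decomp by (simp add: scaleR_add_right divide_inverse_commute)
  finally show ?thesis by blast
qed

lemma endpoints_in_arc_set:
  assumes "valid_arc a" shows "fst a \<in> arc_set a" "snd a \<in> arc_set a"
  unfolding arc_set_chord
  by (rule image_eqI[where x = 0], simp add: assms, simp)
    (rule image_eqI[where x = 1], simp add: assms, simp)

lemma endpoints_notin_arc_relint:
  assumes "valid_arc a"
  shows "fst a \<notin> arc_relint a" "snd a \<notin> arc_relint a"
proof -
  have "sgn (chord a 0) \<notin> arc_relint a" "sgn (chord a 1) \<notin> arc_relint a"
  proof -
    have "fst a \<noteq> snd a" using assms by (simp add: valid_arc_def)
    then have "arc_relint a = (\<lambda>t. sgn (chord a t)) ` {0<..<1}" by (rule arc_relint_chord)
    then show "sgn (chord a 0) \<notin> arc_relint a" "sgn (chord a 1) \<notin> arc_relint a"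
      using sgn_chord_inj[OF assms] by fastforce+
  qed
  then show "fst a \<notin> arc_relint a" "snd a \<notin> arc_relint a" using assms by simp_all
qed

lemma path_subarc:
  assumes "valid_arc a"
  shows "path (\<lambda>s. sgn (chord a ((1 - s) * t1 + s * t2)))"
  unfolding path_def sgn_div_norm chord_def
  using chord_nonzero[OF assms] unfolding chord_def by (intro continuous_intros) auto

lemma convex_combination_in_unit_interval:
  fixes t1 t2 s :: real
  assumes "t1 \<in> {0..1}" "t2 \<in> {0..1}" "s \<in> {0..1}"
  shows "(1 - s) * t1 + s * t2 \<in> {0..1}"
  using convexD[of "{0..1::real}" t1 t2 "1 - s" s] assms by simp

lemma mem_arc_set_if_nonneg_combination:
  assumes "t1 \<in> {0..1}" "t2 \<in> {0..1}" "0 \<le> \<alpha>" "0 \<le> \<beta>"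
    and "c = \<alpha> *\<^sub>R chord a t1 + \<beta> *\<^sub>R chord a t2" "c \<in> S2"
  shows "c \<in> arc_set a"
proof -
  have "\<not> (\<alpha> = 0 \<and> \<beta> = 0)" using assms(5,6) by (auto simp: mem_S2_iff)
  then have "\<alpha> + \<beta> > 0" using assms(3,4) by linarith
  define \<theta> where "\<theta> = \<beta> / (\<alpha> + \<beta>)"
  have \<theta>: "\<theta> \<in> {0..1}" "(\<alpha> + \<beta>) * (1 - \<theta>) = \<alpha>" "(\<alpha> + \<beta>) * \<theta> = \<beta>"
    using assms(3,4) \<open>\<alpha> + \<beta> > 0\<close> by (auto simp: \<theta>_def field_simps)
  have "c = (\<alpha> + \<beta>) *\<^sub>R chord a ((1 - \<theta>) * t1 + \<theta> * t2)"
    unfolding chord_convex_combination scaleR_add_right scaleR_scaleR \<theta>(2,3) assms(5) ..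
  then have "sgn c = sgn (chord a ((1 - \<theta>) * t1 + \<theta> * t2))"
    using \<open>\<alpha> + \<beta> > 0\<close> by (simp add: sgn_scaleR)
  moreover have "sgn c = c" using assms(6) by (simp add: mem_S2_iff sgn_div_norm)
  ultimately show ?thesis
    using convex_combination_in_unit_interval[OF assms(1,2) \<theta>(1)] by (auto simp: arc_set_chord)
qed

lemma arc_relint_meet_if_endpoint_inside:
  fixes n :: "real^3"
  assumes b: "valid_arc b" and c: "valid_arc c"
    and n: "n \<noteq> 0" "n \<bullet> fst b = 0" "n \<bullet> snd b = 0" "n \<bullet> fst c = 0"
    and inside: "snd c \<in> arc_relint b"
  shows "arc_relint b \<inter> arc_relint c \<noteq> {}"
proof -
  have "fst b \<noteq> snd b" "fst c \<noteq> snd c" using b c by (simp_all add: valid_arc_def)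
  then obtain s where s: "s \<in> {0<..<1}" "snd c = sgn (chord b s)"
    using inside arc_relint_chord by auto
  define l where "l = inverse (norm (chord b s))"
  have l: "l > 0" using chord_nonzero[OF b] by (simp add: l_def)
  have snd_c: "snd c = l *\<^sub>R chord b s" using s(2) by (simp add: sgn_div_norm l_def)
  have "(fst b \<times> snd b) \<bullet> fst c = 0" using triple_product_eq_0[OF n] .
  then obtain \<alpha> \<beta> where fst_c: "fst c = \<alpha> *\<^sub>R fst b + \<beta> *\<^sub>R snd b"
    using in_span_if_orthogonal_cross valid_arc_cross_nonzero[OF b] by blast
  define cb where "cb = (\<lambda>t::real. (1 - t) * \<alpha> + t * (l * (1 - s)))"
  define cq where "cq = (\<lambda>t::real. (1 - t) * \<beta> + t * (l * s))"
  have chord_c: "chord c t = cb t *\<^sub>R fst b + cq t *\<^sub>R snd b" for t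
    unfolding chord_def fst_c snd_c cb_def cq_def by (simp add: algebra_simps chord_def)
  \<comment> \<open>near the endpoint \<open>snd c\<close>, the chord of \<open>c\<close> is a positive combination of \<open>fst b\<close> and \<open>snd b\<close>\<close>
  have "\<forall>\<^sub>F t in at_left 1. 0 < cb t \<and> 0 < cq t \<and> t \<in> {0<..<1::real}"
  proof (intro eventually_conj)
    have "(cb \<longlongrightarrow> cb 1) (at_left 1)" "(cq \<longlongrightarrow> cq 1) (at_left 1)"
      unfolding cb_def cq_def by (intro tendsto_intros)+
    moreover have "cb 1 > 0" "cq 1 > 0" using l s by (simp_all add: cb_def cq_def)
    ultimately show "\<forall>\<^sub>F t in at_left 1. 0 < cb t" "\<forall>\<^sub>F t in at_left 1. 0 < cq t"
      by (simp_all add: order_tendstoD(1))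
    show "\<forall>\<^sub>F t in at_left 1. t \<in> {0<..<1::real}"
      using eventually_at_left_real[of 0 "1::real"] by simp
  qed
  then obtain t where t: "0 < cb t" "0 < cq t" "t \<in> {0<..<1}"
    using eventually_happens' trivial_limit_at_left_real by blast
  define \<sigma> where "\<sigma> = cq t / (cb t + cq t)"
  have \<sigma>: "\<sigma> \<in> {0<..<1}" using t by (auto simp: \<sigma>_def)
  have "(cb t + cq t) * (1 - \<sigma>) = cb t" "(cb t + cq t) * \<sigma> = cq t"
    using t by (simp_all add: \<sigma>_def field_simps)
  then have "(cb t + cq t) *\<^sub>R chord b \<sigma> = chord c t"
    unfolding chord_c chord_def[of b] scaleR_add_right scaleR_scaleR by simp
  then have "sgn (chord c t) = sgn (chord b \<sigma>)"
    using t by (metis add_pos_pos sgn_pos sgn_scaleR scaleR_one)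
  moreover have "sgn (chord c t) \<in> arc_relint c" "sgn (chord b \<sigma>) \<in> arc_relint b"
    using t(3) \<sigma> arc_relint_chord \<open>fst b \<noteq> snd b\<close> \<open>fst c \<noteq> snd c\<close> by auto
  ultimately show ?thesis by auto
qed

lemma arc_relint_meet_if_cocircular:
  fixes n :: "real^3"
  assumes b: "valid_arc b" and c: "valid_arc c"
    and n: "n \<noteq> 0" "n \<bullet> fst b = 0" "n \<bullet> snd b = 0" "n \<bullet> fst c = 0" "n \<bullet> snd c = 0"
    and e: "e \<in> {fst c, snd c}" "e \<in> arc_relint b"
  shows "arc_relint b \<inter> arc_relint c \<noteq> {}"
proof (cases "e = snd c")
  case True
  then show ?thesis using arc_relint_meet_if_endpoint_inside[OF b c n(1-4)] e by simp
next
  case False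
  define c' where "c' = (snd c, fst c)"
  have "valid_arc c'" using c by (auto simp: valid_arc_def c'_def minus_equation_iff)
  moreover have "arc_relint c' = arc_relint c"
    by (simp add: arc_relint_def c'_def open_segment_commute)
  ultimately show ?thesis
    using arc_relint_meet_if_endpoint_inside[OF b _ n(1,2,3), of c'] n(5) e False
    by (simp add: c'_def)
qed

lemma no_common_edge_if_not_coplanar:
  fixes y1 y2 y3 :: "real^3"
  assumes "(y1 \<times> y2) \<bullet> y3 \<noteq> 0"
  shows "\<not> (\<exists>E. sph_edge R E \<and> y1 \<in> E \<and> y2 \<in> E \<and> y3 \<in> E)"
proof
  assume "\<exists>E. sph_edge R E \<and> y1 \<in> E \<and> y2 \<in> E \<and> y3 \<in> E"
  then obtain u where "u \<noteq> 0" "u \<bullet> y1 = 0" "u \<bullet> y2 = 0" "u \<bullet> y3 = 0"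
    unfolding sph_edge_def by blast
  then show False using triple_product_eq_0 assms by blast
qed

lemma dist_sgn_le:
  fixes w z :: "'a::real_normed_vector"
  assumes "norm z = 1"
  shows "dist (sgn w) z \<le> 2 * dist w z"
proof (cases "w = 0")
  case False
  have "sgn w - w = (inverse (norm w) - 1) *\<^sub>R w" by (simp add: sgn_div_norm algebra_simps)
  then have "norm (sgn w - w) = \<bar>(inverse (norm w) - 1) * norm w\<bar>"
    by (simp add: abs_mult)
  also have "\<dots> = \<bar>1 - norm w\<bar>"
    using False by (simp add: algebra_simps)
  also have "\<dots> \<le> dist w z"
    using assms norm_triangle_ineq3[of z w] by (simp add: dist_norm norm_minus_commute)
  finally show ?thesis using dist_triangle[of "sgn w" z w] by (simp add: dist_norm)
qed (use assms in simp)

lemma convex_cone_interior_scaleR: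
  fixes S :: "'a::real_normed_vector set"
  assumes "convex_cone S" "x \<in> interior S" "c > 0"
  shows "c *\<^sub>R x \<in> interior S"
proof -
  have "(\<lambda>y. c *\<^sub>R y) ` interior S \<subseteq> interior S"
  proof (rule interior_maximal)
    show "(\<lambda>y. c *\<^sub>R y) ` interior S \<subseteq> S"
      using assms(1,3) interior_subset by (auto intro!: convex_cone_scaleR)
  qed (use assms(3) in auto)
  then show ?thesis using assms(2) by blast
qed

lemma convex_interior_combination:
  fixes S :: "'a::euclidean_space set"
  assumes "convex S" "x \<in> interior S" "y \<in> S" "0 \<le> \<theta>" "\<theta> < 1"
  shows "(1 - \<theta>) *\<^sub>R x + \<theta> *\<^sub>R y \<in> interior S"
proof -
  have "x - \<theta> *\<^sub>R (x - y) \<in> interior S"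
  proof (cases "\<theta> = 0")
    case False
    have "y - (1 - \<theta>) *\<^sub>R (y - x) \<in> interior S"
      using mem_interior_convex_shrink[OF assms(1-3)] assms(4,5) False by simp
    then show ?thesis by (simp add: algebra_simps)
  qed (use assms(2) in simp)
  then show ?thesis by (simp add: algebra_simps)
qed

lemma convex_cone_interior_add:
  fixes S :: "'a::euclidean_space set"
  assumes "convex_cone S" "x \<in> interior S" "y \<in> S"
  shows "x + y \<in> interior S"
proof -
  have "convex S" using assms(1) by (simp add: convex_cone_def)
  then have "(1 - 1/2) *\<^sub>R x + (1/2) *\<^sub>R y \<in> interior S"
    using convex_interior_combination[OF _ assms(2,3), of "1/2"] by simp
  from convex_cone_interior_scaleR[OF assms(1) this, of 2] show ?thesis
    by (simp add: scaleR_add_right)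
qed

lemma open_avoids_hyperplanes:
  fixes V :: "'a::euclidean_space set"
  assumes "finite V" "open W" "W \<noteq> {}"
  shows "\<exists>w\<in>W. \<forall>d\<in>V. d \<noteq> 0 \<longrightarrow> w \<bullet> d \<noteq> 0"
proof (rule ccontr)
  assume "\<not> ?thesis"
  then have "W \<subseteq> (\<Union>d\<in>V - {0}. {w. d \<bullet> w = 0})"
    by (fastforce simp: inner_commute)
  moreover have "negligible (\<Union>d\<in>V - {0}. {w. d \<bullet> w = 0})"
    using assms(1) by (intro negligible_Union) (auto intro!: negligible_hyperplane)
  ultimately show False
    using negligible_subset open_not_negligible assms(2,3) by blast
qed

locale pointed_hull =
  fixes A :: "(real^3) set" and u0 :: "real^3"
  assumes finite_A: "finite A" and A_nonempty: "A \<noteq> {}" and A_sphere: "A \<subseteq> S2"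
    and u0_pos: "\<And>c. c \<in> A \<Longrightarrow> 0 < u0 \<bullet> c"
begin

abbreviation H :: "(real^3) set" where "H \<equiv> sph_hull A"

definition K :: "(real^3) set" where "K = convex_cone hull A"

text \<open>Central projection onto the plane \<open>u0 \<bullet> v = 1\<close>. It maps great-circle arcs inside the
  hemisphere of \<open>u0\<close> to straight segments; the image of arc \<open>a\<close> runs in the direction
  \<open>arc_direction a\<close>.\<close>
definition gnomonic :: "real^3 \<Rightarrow> real^3" where "gnomonic v = v /\<^sub>R (u0 \<bullet> v)"

definition arc_direction :: "arc \<Rightarrow> real^3" where
  "arc_direction a = (u0 \<bullet> fst a) *\<^sub>R snd a - (u0 \<bullet> snd a) *\<^sub>R fst a"

lemma convex_cone_K: "convex_cone K" and closed_K: "closed K" and A_subset_K: "A \<subseteq> K"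
  by (simp_all add: K_def convex_cone_convex_cone_hull closed_convex_cone_hull finite_A hull_subset)

lemma H_eq: "H = S2 \<inter> K"
proof -
  have "\<exists>u. \<forall>c\<in>A. 0 < u \<bullet> c" using u0_pos by blast
  then show ?thesis
    by (auto simp: sph_hull_def K_def convex_cone_hull_convex_hull_nonempty[OF A_nonempty])
qed

lemma K_height_bound: "\<exists>m>0. \<forall>v\<in>K. m * norm v \<le> u0 \<bullet> v"
proof (intro exI conjI ballI)
  define m where "m = Min ((\<bullet>) u0 ` A)"
  show "m > 0" unfolding m_def using finite_A A_nonempty u0_pos by (subst Min_gr_iff) auto
  fix v assume "v \<in> K"
  have convex: "convex {w. m \<le> u0 \<bullet> w \<and> norm w \<le> 1}"
    using convex_Int[OF convex_halfspace_ge[of m u0] convex_cball[of 0 1]]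
    by (simp add: Int_def inner_commute)
  have "A \<subseteq> {w. m \<le> u0 \<bullet> w \<and> norm w \<le> 1}"
    using A_sphere finite_A by (auto simp: m_def mem_S2_iff)
  then have hull: "convex hull A \<subseteq> {w. m \<le> u0 \<bullet> w \<and> norm w \<le> 1}"
    using convex by (rule hull_minimal)
  obtain c w where cw: "v = c *\<^sub>R w" "c \<ge> 0" "w \<in> convex hull A"
    using \<open>v \<in> K\<close> unfolding K_def convex_cone_hull_convex_hull_nonempty[OF A_nonempty] by auto
  have "m * norm v = c * (m * norm w)" using cw(1,2) by simp
  also have "\<dots> \<le> c * (u0 \<bullet> w)"
    using hull cw(2,3) \<open>m > 0\<close> by (intro mult_left_mono) (auto intro: order_trans[OF mult_left_le])
  also have "\<dots> = u0 \<bullet> v" using cw(1) by simp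
  finally show "m * norm v \<le> u0 \<bullet> v" .
qed

lemma inner_u0_pos: "v \<in> K \<Longrightarrow> v \<noteq> 0 \<Longrightarrow> 0 < u0 \<bullet> v"
  using K_height_bound by (meson mult_pos_pos order_less_le_trans zero_less_norm_iff)

lemma sgn_in_K_iff: "sgn v \<in> K \<longleftrightarrow> v \<in> K"
  using convex_cone_scaleR[OF convex_cone_K, of "norm v" "sgn v"]
    convex_cone_scaleR[OF convex_cone_K, of "inverse (norm v)" v]
  by (cases "v = 0") (auto simp: sgn_div_norm)

lemma sgn_in_interior_K_iff: "v \<noteq> 0 \<Longrightarrow> sgn v \<in> interior K \<longleftrightarrow> v \<in> interior K"
  using convex_cone_interior_scaleR[OF convex_cone_K, of "sgn v" "norm v"]
    convex_cone_interior_scaleR[OF convex_cone_K, of v "inverse (norm v)"]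
  by (auto simp: sgn_div_norm)

lemma sgn_in_H_iff: "v \<noteq> 0 \<Longrightarrow> sgn v \<in> H \<longleftrightarrow> v \<in> K"
  by (simp add: H_eq mem_S2_iff norm_sgn sgn_in_K_iff)

lemma sph_interior_H_iff:
  assumes "z \<in> S2" shows "z \<in> sph_interior H \<longleftrightarrow> z \<in> interior K"
proof
  assume "z \<in> interior K"
  then obtain e where "e > 0" "ball z e \<subseteq> K" by (auto simp: mem_interior)
  then show "z \<in> sph_interior H"
    using assms by (auto simp: sph_interior_def H_eq dist_commute subset_iff)
next
  assume "z \<in> sph_interior H"
  then obtain e where e: "e > 0" "\<And>y. y \<in> S2 \<Longrightarrow> dist y z < e \<Longrightarrow> y \<in> H"
    unfolding sph_interior_def by blast
  have "ball z (min e 1 / 2) \<subseteq> K"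
  proof
    fix w assume "w \<in> ball z (min e 1 / 2)"
    then have "dist w z < min e 1 / 2" by (simp add: dist_commute)
    moreover have "norm z = 1" using assms by (simp add: mem_S2_iff)
    ultimately have "w \<noteq> 0" "dist (sgn w) z < e"
      using dist_sgn_le[of z w] by auto
    then show "w \<in> K" using e(2)[of "sgn w"] sgn_in_H_iff[of w] by (simp add: mem_S2_iff norm_sgn)
  qed
  then show "z \<in> interior K" using e(1) by (auto simp: mem_interior intro!: exI[of _ "min e 1 / 2"])
qed

lemma sgn_in_sph_interior_iff: "v \<noteq> 0 \<Longrightarrow> sgn v \<in> sph_interior H \<longleftrightarrow> v \<in> interior K"
  by (simp add: sph_interior_H_iff mem_S2_iff norm_sgn sgn_in_interior_K_iff)

lemma frontier_K_iff: "v \<in> frontier K \<longleftrightarrow> v \<in> K \<and> v \<notin> interior K"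
  using closed_K by (simp add: frontier_def closure_closed)

lemma sph_boundary_H: "y \<in> sph_boundary H \<longleftrightarrow> y \<in> S2 \<and> y \<in> frontier K"
proof -
  have "closed H" unfolding H_eq S2_def using closed_K by (simp add: closed_Int)
  then show ?thesis
    using sph_interior_H_iff closed_K
    by (auto simp: sph_boundary_def frontier_def closure_closed H_eq)
qed

lemma sgn_in_sph_boundary_iff: "v \<noteq> 0 \<Longrightarrow> sgn v \<in> sph_boundary H \<longleftrightarrow> v \<in> frontier K"
  by (simp add: sph_boundary_H frontier_K_iff mem_S2_iff norm_sgn sgn_in_K_iff
      sgn_in_interior_K_iff)

lemma gnomonic_scaleR: "c \<noteq> 0 \<Longrightarrow> gnomonic (c *\<^sub>R v) = gnomonic v"
  by (simp add: gnomonic_def)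

lemma gnomonic_sgn: "gnomonic (sgn v) = gnomonic v"
  by (cases "v = 0") (simp_all add: sgn_div_norm gnomonic_scaleR)

lemma gnomonic_bounded: "\<exists>B>0. \<forall>v\<in>K. norm (gnomonic v) \<le> B"
proof -
  obtain m where m: "m > 0" "\<And>v. v \<in> K \<Longrightarrow> m * norm v \<le> u0 \<bullet> v"
    using K_height_bound by blast
  have "norm (gnomonic v) \<le> 1 / m" if "v \<in> K" for v
  proof (cases "v = 0")
    case False
    then have "0 < u0 \<bullet> v" using inner_u0_pos that by blast
    then show ?thesis
      using m(1) m(2)[OF that] by (simp add: gnomonic_def field_simps)
  qed (use m(1) in \<open>simp add: gnomonic_def\<close>)
  then show ?thesis using m(1) by (intro exI[of _ "1 / m"]) auto
qed

lemma gnomonic_order_stable: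
  assumes z: "z \<in> K" "0 < n \<bullet> gnomonic z"
  shows "\<exists>r>0. \<forall>w\<in>ball n r. \<forall>y\<in>K. w \<bullet> gnomonic z \<le> w \<bullet> gnomonic y \<longrightarrow> 0 < n \<bullet> gnomonic y"
proof -
  obtain B where B: "B > 0" "\<And>v. v \<in> K \<Longrightarrow> norm (gnomonic v) \<le> B"
    using gnomonic_bounded by blast
  define r where "r = n \<bullet> gnomonic z / (2 * B)"
  have "0 < n \<bullet> gnomonic y" if "w \<in> ball n r" "y \<in> K" "w \<bullet> gnomonic z \<le> w \<bullet> gnomonic y" for w y
  proof -
    have small: "\<bar>(w - n) \<bullet> gnomonic v\<bar> < n \<bullet> gnomonic z / 2" if "v \<in> K" for v
    proof -
      have "\<bar>(w - n) \<bullet> gnomonic v\<bar> \<le> norm (w - n) * B"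
        using Cauchy_Schwarz_ineq2[of "w - n" "gnomonic v"] B(2)[OF that]
        by (meson mult_left_mono norm_ge_zero order_trans)
      also have "\<dots> < r * B"
        using \<open>w \<in> ball n r\<close> B(1) by (simp add: dist_norm norm_minus_commute)
      finally show ?thesis using B(1) by (simp add: r_def)
    qed
    have "n \<bullet> gnomonic z = w \<bullet> gnomonic z - (w - n) \<bullet> gnomonic z" by (simp add: inner_diff_left)
    also have "\<dots> \<le> w \<bullet> gnomonic y - (w - n) \<bullet> gnomonic z" using that(3) by simp
    also have "\<dots> = n \<bullet> gnomonic y + (w - n) \<bullet> gnomonic y - (w - n) \<bullet> gnomonic z"
      by (simp add: inner_diff_left)
    finally show ?thesis using small[OF z(1)] small[OF that(2)] by linarith
  qed
  moreover have "r > 0" using z(2) B(1) by (simp add: r_def)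
  ultimately show ?thesis by blast
qed

lemma arc_direction_nonzero:
  assumes "valid_arc a" "chord a t \<in> K"
  shows "arc_direction a \<noteq> 0"
proof
  assume "arc_direction a = 0"
  then have "(u0 \<bullet> fst a) *\<^sub>R snd a = (u0 \<bullet> snd a) *\<^sub>R fst a"
    by (simp add: arc_direction_def)
  then have "((u0 \<bullet> fst a) *\<^sub>R snd a) \<times> fst a = ((u0 \<bullet> snd a) *\<^sub>R fst a) \<times> fst a"
    "((u0 \<bullet> fst a) *\<^sub>R snd a) \<times> snd a = ((u0 \<bullet> snd a) *\<^sub>R fst a) \<times> snd a"
    by simp_all
  then have "(u0 \<bullet> fst a) *\<^sub>R (fst a \<times> snd a) = 0" "(u0 \<bullet> snd a) *\<^sub>R (fst a \<times> snd a) = 0"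
    by (simp_all add: cross_mult_left cross_skew[of "snd a"])
  then have "u0 \<bullet> fst a = 0" "u0 \<bullet> snd a = 0"
    using valid_arc_cross_nonzero[OF assms(1)] by simp_all
  then have "u0 \<bullet> chord a t = 0" by (simp add: chord_def inner_add_right)
  then show False using inner_u0_pos[OF assms(2) chord_nonzero[OF assms(1)]] by simp
qed

lemma gnomonic_chord_less:
  assumes "0 < u0 \<bullet> chord a s" "0 < u0 \<bullet> chord a t" "s < t" "0 < w \<bullet> arc_direction a"
  shows "w \<bullet> gnomonic (chord a s) < w \<bullet> gnomonic (chord a t)"
proof -
  have "(w \<bullet> chord a t) * (u0 \<bullet> chord a s) - (w \<bullet> chord a s) * (u0 \<bullet> chord a t)
      = (t - s) * (w \<bullet> arc_direction a)"
    unfolding chord_def arc_direction_def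
    by (simp add: inner_add_right inner_diff_right algebra_simps)
  also have "\<dots> > 0" using assms(3,4) by simp
  finally have "(w \<bullet> chord a s) * (u0 \<bullet> chord a t) < (w \<bullet> chord a t) * (u0 \<bullet> chord a s)"
    by simp
  then show ?thesis
    using assms(1,2) by (simp add: gnomonic_def field_simps)
qed

lemma chord_interior_toward:
  assumes "chord a tz \<in> interior K" "chord a t \<in> K" "tz \<le> s \<and> s < t \<or> t < s \<and> s \<le> tz"
  shows "chord a s \<in> interior K"
proof -
  define \<theta> where "\<theta> = (s - tz) / (t - tz)"
  have "t \<noteq> tz" "0 \<le> \<theta>" "\<theta> < 1" using assms(3) by (auto simp: \<theta>_def field_simps)
  moreover have "\<theta> * (t - tz) = s - tz" using \<open>t \<noteq> tz\<close> by (simp add: \<theta>_def)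
  then have "(1 - \<theta>) * tz + \<theta> * t = s" by (simp add: algebra_simps)
  ultimately show ?thesis
    using convex_interior_combination[OF _ assms(1,2)] convex_cone_K
      chord_convex_combination[of a \<theta> tz t]
    by (simp add: convex_cone_def)
qed

lemma chord_interior_nearby:
  assumes "chord a t \<in> interior K"
  obtains \<delta> where "\<delta> > 0" "\<And>t'. \<bar>t' - t\<bar> < \<delta> \<Longrightarrow> chord a t' \<in> interior K"
proof -
  have "open (chord a -` interior K)" by (simp add: continuous_open_vimage isCont_chord)
  then obtain \<delta> where "\<delta> > 0" "ball t \<delta> \<subseteq> chord a -` interior K"
    using assms open_contains_ball by blast
  then show ?thesis using that by (auto simp: subset_iff dist_real_def abs_minus_commute)
qed

lemma other_interior_param:
  assumes "t \<in> {0..1}" "chord a t \<in> interior K"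
  obtains t' where "t' \<in> {0..1}" "t' \<noteq> t" "chord a t' \<in> interior K"
proof -
  obtain \<delta> where \<delta>: "\<delta> > 0" "\<And>t'. \<bar>t' - t\<bar> < \<delta> \<Longrightarrow> chord a t' \<in> interior K"
    using chord_interior_nearby assms(2) by blast
  define t' where "t' = (if t \<le> 1/2 then t + min (\<delta>/2) (1/2) else t - min (\<delta>/2) (1/2))"
  have "t' \<in> {0..1}" "t' \<noteq> t" "\<bar>t' - t\<bar> < \<delta>" using assms(1) \<delta>(1) by (auto simp: t'_def)
  then show ?thesis using that \<delta>(2) by blast
qed

lemma interior_K_if_mixed_combination:
  assumes "\<mu> *\<^sub>R v1 + \<nu> *\<^sub>R v2 \<in> interior K" "\<alpha> *\<^sub>R v1 + \<beta> *\<^sub>R v2 \<in> K"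
    and "\<mu> > 0" "\<nu> > 0" "\<alpha> < 0" "\<beta> \<ge> 0"
  shows "v2 \<in> interior K"
proof -
  define \<kappa> where "\<kappa> = \<mu> / - \<alpha>"
  have "\<kappa> > 0" "\<kappa> * \<alpha> = - \<mu>" using assms(3,5) by (auto simp: \<kappa>_def divide_pos_neg)
  have "(\<mu> *\<^sub>R v1 + \<nu> *\<^sub>R v2) + \<kappa> *\<^sub>R (\<alpha> *\<^sub>R v1 + \<beta> *\<^sub>R v2)
      = (\<mu> + \<kappa> * \<alpha>) *\<^sub>R v1 + (\<nu> + \<kappa> * \<beta>) *\<^sub>R v2"
    by (simp add: algebra_simps)
  also have "\<dots> = (\<nu> + \<kappa> * \<beta>) *\<^sub>R v2" using \<open>\<kappa> * \<alpha> = - \<mu>\<close> by simp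
  finally have "(\<mu> *\<^sub>R v1 + \<nu> *\<^sub>R v2) + \<kappa> *\<^sub>R (\<alpha> *\<^sub>R v1 + \<beta> *\<^sub>R v2) = (\<nu> + \<kappa> * \<beta>) *\<^sub>R v2" .
  moreover have "(\<mu> *\<^sub>R v1 + \<nu> *\<^sub>R v2) + \<kappa> *\<^sub>R (\<alpha> *\<^sub>R v1 + \<beta> *\<^sub>R v2) \<in> interior K"
    using convex_cone_interior_add[OF convex_cone_K assms(1)] convex_cone_scaleR[OF convex_cone_K]
      assms(2) \<open>\<kappa> > 0\<close> by simp
  moreover have "\<nu> + \<kappa> * \<beta> > 0" using assms(4,6) \<open>\<kappa> > 0\<close> by (simp add: add_pos_nonneg)
  ultimately show ?thesis
    using convex_cone_interior_scaleR[OF convex_cone_K,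
        of "(\<nu> + \<kappa> * \<beta>) *\<^sub>R v2" "inverse (\<nu> + \<kappa> * \<beta>)"]
    by simp
qed

lemma frontier_combination_nonneg:
  assumes "v1 \<in> frontier K" "v2 \<in> frontier K" "v1 \<noteq> 0" "v2 \<noteq> 0"
    and "\<mu> *\<^sub>R v1 + \<nu> *\<^sub>R v2 \<in> interior K" "\<mu> > 0" "\<nu> > 0" "\<alpha> *\<^sub>R v1 + \<beta> *\<^sub>R v2 \<in> K"
  shows "0 \<le> \<alpha> \<and> 0 \<le> \<beta>"
proof -
  have "v1 \<notin> interior K" "v2 \<notin> interior K" "v1 \<in> K" "v2 \<in> K"
    using assms(1,2) by (simp_all add: frontier_K_iff)
  then have "\<not> (\<alpha> < 0 \<and> 0 \<le> \<beta>)" "\<not> (\<beta> < 0 \<and> 0 \<le> \<alpha>)"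
    using interior_K_if_mixed_combination[OF assms(5,8,6,7)]
      interior_K_if_mixed_combination[of \<nu> v2 \<mu> v1 \<beta> \<alpha>] assms(5-8) by (auto simp: add.commute)
  moreover have "\<not> (\<alpha> < 0 \<and> \<beta> < 0)"
  proof
    assume "\<alpha> < 0 \<and> \<beta> < 0"
    moreover have "0 < u0 \<bullet> v1" "0 < u0 \<bullet> v2"
      using inner_u0_pos \<open>v1 \<in> K\<close> \<open>v2 \<in> K\<close> assms(3,4) by auto
    ultimately have "u0 \<bullet> (\<alpha> *\<^sub>R v1 + \<beta> *\<^sub>R v2) < 0"
      by (simp add: inner_add_right add_neg_neg mult_neg_pos)
    moreover have "0 \<le> u0 \<bullet> (\<alpha> *\<^sub>R v1 + \<beta> *\<^sub>R v2)"
      using inner_u0_pos[OF assms(8)] by fastforce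
    ultimately show False by simp
  qed
  ultimately show ?thesis by linarith
qed

lemma inj_on_gnomonic_H: "inj_on gnomonic H"
proof (rule inj_onI)
  fix y y' assume y: "y \<in> H" "y' \<in> H" "gnomonic y = gnomonic y'"
  have "y \<in> K" "y' \<in> K" "norm y = 1" "norm y' = 1" using y(1,2) by (simp_all add: H_eq mem_S2_iff)
  then have "y \<noteq> 0" "y' \<noteq> 0" by auto
  then have pos: "0 < u0 \<bullet> y" "0 < u0 \<bullet> y'" using inner_u0_pos \<open>y \<in> K\<close> \<open>y' \<in> K\<close> by blast+
  have "y = (u0 \<bullet> y) *\<^sub>R gnomonic y" using pos by (simp add: gnomonic_def)
  also have "\<dots> = ((u0 \<bullet> y) / (u0 \<bullet> y')) *\<^sub>R y'"
    using y(3) by (simp add: gnomonic_def divide_inverse)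
  finally have "sgn y = sgn y'" using pos by (metis divide_pos_pos sgn_pos sgn_scaleR scaleR_one)
  then show "y = y'" using \<open>norm y = 1\<close> \<open>norm y' = 1\<close> by (simp add: sgn_div_norm)
qed

lemma cross_nonzero_H:
  assumes "y1 \<in> H" "y2 \<in> H" "y1 \<noteq> y2"
  shows "y1 \<times> y2 \<noteq> 0"
proof (rule cross_nonzero_if_unit)
  show "norm y1 = 1" "norm y2 = 1" using assms(1,2) by (simp_all add: H_eq mem_S2_iff)
  then have "y1 \<noteq> 0" "y2 \<noteq> 0" by auto
  then have "0 < u0 \<bullet> y1" "0 < u0 \<bullet> y2" using assms(1,2) inner_u0_pos by (auto simp: H_eq)
  then show "y2 \<noteq> - y1" by auto
qed (use assms(3) in simp)

end

locale hull_diagram = pointed_hull A u0 for A u0 +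
  fixes D :: "arc set" and x :: "real^3"
  assumes diagram: "spherical_diagram D"
    and arc_pole: "\<And>a. a \<in> D \<Longrightarrow>
      \<exists>c\<in>A. c \<notin> arc_set a \<and> (\<exists>u. u \<noteq> 0 \<and> u \<bullet> c = 0 \<and> (\<forall>z\<in>arc_set a. u \<bullet> z = 0))"
    and x_interior: "x \<in> sph_interior H"
    and x_on_diagram: "x \<in> \<Union>(arc_set ` D)"
begin

lemma finite_D: "finite D"
  using diagram by (simp add: spherical_diagram_def)

lemma valid_arc_D: "a \<in> D \<Longrightarrow> valid_arc a"
  using diagram by (simp add: spherical_diagram_def)

lemma endpoint_blocked: "a \<in> D \<Longrightarrow> e \<in> {fst a, snd a} \<Longrightarrow> \<exists>b\<in>D. e \<in> arc_relint b"
  using diagram by (auto simp: spherical_diagram_def)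

lemma arc_eq_if_relint_meet: "a \<in> D \<Longrightarrow> b \<in> D \<Longrightarrow> arc_relint a \<inter> arc_relint b \<noteq> {} \<Longrightarrow> a = b"
  using diagram by (auto simp: spherical_diagram_def)

definition reachable :: "real^3 \<Rightarrow> bool" where
  "reachable z \<longleftrightarrow> path_component (\<Union>(arc_set ` D) \<inter> sph_interior H) x z"

definition reachable_at :: "arc \<Rightarrow> real \<Rightarrow> bool" where
  "reachable_at a t \<longleftrightarrow> a \<in> D \<and> t \<in> {0..1} \<and> reachable (sgn (chord a t))"

lemma reachable_x: "reachable x"
  unfolding reachable_def using x_interior x_on_diagram by (simp add: path_component_refl)

lemma reachable_imp_reachable_at: "reachable z \<Longrightarrow> \<exists>a t. reachable_at a t \<and> z = sgn (chord a t)"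
  unfolding reachable_def reachable_at_def using path_component_mem(2)
  by (fastforce simp: arc_set_chord)

lemma reachable_at_interior: "reachable_at a t \<Longrightarrow> chord a t \<in> interior K"
  unfolding reachable_at_def reachable_def
  using path_component_mem(2) sgn_in_sph_interior_iff chord_nonzero valid_arc_D by blast

lemma subarc_path:
  assumes a: "a \<in> D" and t: "t1 \<in> {0..1}" "t2 \<in> {0..1}"
    and int: "chord a t1 \<in> interior K" and "chord a t2 \<in> K"
  obtains g where "path g" "pathstart g = sgn (chord a t1)" "pathfinish g = sgn (chord a t2)"
    "path_image g \<subseteq> arc_set a" "\<And>s. s \<in> {0..<1} \<Longrightarrow> g s \<in> sph_interior H"
proof
  let ?g = "\<lambda>s. sgn (chord a ((1 - s) * t1 + s * t2))"
  show "path ?g" using path_subarc valid_arc_D[OF a] by blast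
  show "pathstart ?g = sgn (chord a t1)" "pathfinish ?g = sgn (chord a t2)"
    by (simp_all add: pathstart_def pathfinish_def)
  show "path_image ?g \<subseteq> arc_set a"
    using convex_combination_in_unit_interval[OF t] by (auto simp: path_image_def arc_set_chord)
  fix s :: real assume "s \<in> {0..<1}"
  then have "chord a ((1 - s) * t1 + s * t2) \<in> interior K"
    using convex_interior_combination[OF _ int \<open>chord a t2 \<in> K\<close>] convex_cone_K
    by (simp add: chord_convex_combination convex_cone_def)
  then show "?g s \<in> sph_interior H"
    using sgn_in_sph_interior_iff chord_nonzero valid_arc_D[OF a] by blast
qed

lemma reachable_at_along_arc:
  assumes "reachable_at a t1" "t2 \<in> {0..1}" "chord a t2 \<in> interior K"
  shows "reachable_at a t2"
proof -
  have a: "a \<in> D" "t1 \<in> {0..1}" using assms(1) by (simp_all add: reachable_at_def)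
  obtain g where g: "path g" "pathstart g = sgn (chord a t1)" "pathfinish g = sgn (chord a t2)"
    "path_image g \<subseteq> arc_set a" "\<And>s. s \<in> {0..<1} \<Longrightarrow> g s \<in> sph_interior H"
    using subarc_path[OF a assms(2) reachable_at_interior[OF assms(1)]] assms(3) interior_subset
    by blast
  have "g 1 \<in> sph_interior H"
    using g(3) assms(3) sgn_in_sph_interior_iff chord_nonzero valid_arc_D[OF a(1)]
    by (simp add: pathfinish_def)
  then have "g s \<in> sph_interior H" if "s \<in> {0..1}" for s
    using g(5)[of s] that by (cases "s = 1") auto
  then have "path_image g \<subseteq> \<Union>(arc_set ` D) \<inter> sph_interior H"
    using g(4) a(1) by (auto simp: path_image_def)
  then have "path_component (\<Union>(arc_set ` D) \<inter> sph_interior H) (sgn (chord a t1)) (sgn (chord a t2))"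
    using g(1-3) by (auto simp: path_component_def)
  then show ?thesis
    using assms(1,2) path_component_trans by (auto simp: reachable_at_def reachable_def)
qed

lemma int_connected_along_arc:
  assumes "reachable_at a t1" "t2 \<in> {0..1}" "chord a t2 \<in> K"
  shows "int_connected D H x (sgn (chord a t2))"
proof -
  have a: "a \<in> D" "t1 \<in> {0..1}" using assms(1) by (simp_all add: reachable_at_def)
  obtain g where g: "path g" "pathstart g = x" "pathfinish g = sgn (chord a t1)"
    "path_image g \<subseteq> \<Union>(arc_set ` D) \<inter> sph_interior H"
    using assms(1) unfolding reachable_at_def reachable_def path_component_def by blast
  obtain h where h: "path h" "pathstart h = sgn (chord a t1)" "pathfinish h = sgn (chord a t2)"
    "path_image h \<subseteq> arc_set a" "\<And>s. s \<in> {0..<1} \<Longrightarrow> h s \<in> sph_interior H"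
    using subarc_path[OF a assms(2) reachable_at_interior[OF assms(1)] assms(3)] by blast
  have "(g +++ h) t \<in> sph_interior H" if "t \<in> {0<..<1}" for t
  proof (cases "t \<le> 1/2")
    case True
    then have "g (2 * t) \<in> path_image g" using that by (auto simp: path_image_def)
    then show ?thesis using True g(4) by (auto simp: joinpaths_def)
  qed (use that h(5) in \<open>auto simp: joinpaths_def\<close>)
  then show ?thesis
    unfolding int_connected_def using g h a(1)
    by (intro exI[of _ "g +++ h"]) (auto simp: path_image_join)
qed

lemma pole_in_chord_span:
  assumes "a \<in> D" "t1 \<noteq> t2"
  obtains c \<alpha> \<beta> where "c \<in> A" "c \<notin> arc_set a" "c = \<alpha> *\<^sub>R chord a t1 + \<beta> *\<^sub>R chord a t2"
proof -
  have va: "valid_arc a" using valid_arc_D assms(1) .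
  obtain c u where c: "c \<in> A" "c \<notin> arc_set a" "u \<noteq> 0" "u \<bullet> c = 0" "\<forall>z\<in>arc_set a. u \<bullet> z = 0"
    using arc_pole[OF assms(1)] by blast
  have "(fst a \<times> snd a) \<bullet> c = 0"
    using triple_product_eq_0[OF c(3) _ _ c(4)] c(5) endpoints_in_arc_set[OF va] by blast
  then have "(chord a t1 \<times> chord a t2) \<bullet> c = 0" by (simp add: cross_chord)
  moreover have "chord a t1 \<times> chord a t2 \<noteq> 0"
    using cross_chord[of a t1 t2] valid_arc_cross_nonzero[OF va] assms(2) by simp
  ultimately show ?thesis using in_span_if_orthogonal_cross c(1,2) that by blast
qed

text \<open>The pole in \<open>A\<close> of the arc lies in the plane of two boundary points of the chord, and
  the interior point between them forces it to be a nonnegative combination of the two, i.e. to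
  lie on the arc.\<close>
lemma chord_frontier_unique:
  assumes a: "a \<in> D" and t: "t1 \<in> {0..1}" "t2 \<in> {0..1}"
    and frontier: "chord a t1 \<in> frontier K" "chord a t2 \<in> frontier K"
    and int: "chord a tz \<in> interior K"
  shows "t1 = t2"
proof -
  have va: "valid_arc a" using valid_arc_D[OF a] .
  have K: "chord a t \<in> K" "chord a t \<notin> interior K" if "chord a t \<in> frontier K" for t
    using that by (simp_all add: frontier_K_iff)
  have False if lt: "t1 < t2" and t: "t1 \<in> {0..1}" "t2 \<in> {0..1}"
    and frontier: "chord a t1 \<in> frontier K" "chord a t2 \<in> frontier K" for t1 t2
  proof -
    have "t1 < tz"
      using chord_interior_toward[OF int K(1)[OF frontier(2)], of t1] K(2)[OF frontier(1)] lt
      by force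
    have "tz < t2"
      using chord_interior_toward[OF int K(1)[OF frontier(1)], of t2] K(2)[OF frontier(2)] lt
      by force
    define \<nu> where "\<nu> = (tz - t1) / (t2 - t1)"
    have "\<nu> * (t2 - t1) = tz - t1" using lt by (simp add: \<nu>_def)
    then have "(1 - \<nu>) * t1 + \<nu> * t2 = tz" by (simp add: algebra_simps)
    moreover have "0 < \<nu>" "0 < 1 - \<nu>"
      using \<open>t1 < tz\<close> \<open>tz < t2\<close> by (auto simp: \<nu>_def field_simps)
    ultimately have \<nu>: "0 < \<nu>" "0 < 1 - \<nu>" "(1 - \<nu>) * t1 + \<nu> * t2 = tz" by blast+
    obtain c \<alpha> \<beta> where c: "c \<in> A" "c \<notin> arc_set a" "c = \<alpha> *\<^sub>R chord a t1 + \<beta> *\<^sub>R chord a t2"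
      using pole_in_chord_span[OF a less_imp_neq[OF lt]] by blast
    have "(1 - \<nu>) *\<^sub>R chord a t1 + \<nu> *\<^sub>R chord a t2 \<in> interior K"
      using int \<nu>(3) chord_convex_combination[of a \<nu> t1 t2] by simp
    moreover have "\<alpha> *\<^sub>R chord a t1 + \<beta> *\<^sub>R chord a t2 \<in> K" using c(1,3) A_subset_K by auto
    ultimately have "0 \<le> \<alpha> \<and> 0 \<le> \<beta>"
      by (rule frontier_combination_nonneg[OF frontier chord_nonzero[OF va] chord_nonzero[OF va] _
            \<nu>(2,1)])
    then have "c \<in> arc_set a"
      using mem_arc_set_if_nonneg_combination[OF t _ _ c(3)] c(1) A_sphere by auto
    then show False using c(2) by simp
  qed
  then show ?thesis using t frontier by (metis linorder_neqE_linordered_idom)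
qed

lemma thrusts_chord:
  assumes "a \<in> D" "t \<in> {0..1}" "chord a t \<in> frontier K" "tz \<in> {0..1}" "chord a tz \<in> interior K"
  shows "thrusts a H (sgn (chord a t))"
proof -
  have nz: "chord a s \<noteq> 0" for s using chord_nonzero valid_arc_D assms(1) by blast
  have "sgn (chord a tz) \<in> arc_set a \<inter> sph_interior H"
    using assms(4,5) sgn_in_sph_interior_iff[OF nz] by (auto simp: arc_set_chord)
  then show ?thesis
    unfolding thrusts_def using assms(2,3) sgn_in_sph_boundary_iff[OF nz]
    by (auto simp: arc_set_chord)
qed

lemma thrusts_unique:
  assumes "a \<in> D" "thrusts a H y1" "thrusts a H y2"
  shows "y1 = y2"
proof -
  have va: "valid_arc a" using valid_arc_D[OF assms(1)] .
  obtain t1 t2 tz where t: "t1 \<in> {0..1}" "t2 \<in> {0..1}"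
    "y1 = sgn (chord a t1)" "y2 = sgn (chord a t2)" "chord a tz \<in> interior K"
    using assms(2,3) sgn_in_sph_interior_iff[OF chord_nonzero[OF va]]
    unfolding thrusts_def arc_set_chord by blast
  moreover have "chord a t1 \<in> frontier K" "chord a t2 \<in> frontier K"
    using assms(2,3) t(3,4) sgn_in_sph_boundary_iff[OF chord_nonzero[OF va]]
    by (auto simp: thrusts_def)
  ultimately show ?thesis using chord_frontier_unique[OF assms(1) t(1,2)] by blast
qed

lemma gnomonic_increase_inside:
  assumes a: "a \<in> D" and t: "t \<in> {0<..<1}" and int: "chord a t \<in> interior K"
    and w: "w \<bullet> arc_direction a \<noteq> 0"
  obtains t' where "t' \<in> {0..1}" "chord a t' \<in> interior K"
    "w \<bullet> gnomonic (chord a t) < w \<bullet> gnomonic (chord a t')"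
proof -
  have pos: "0 < u0 \<bullet> chord a s" if "chord a s \<in> interior K" for s
    using inner_u0_pos interior_subset chord_nonzero valid_arc_D[OF a] that by blast
  obtain \<delta> where \<delta>: "\<delta> > 0" "\<And>t'. \<bar>t' - t\<bar> < \<delta> \<Longrightarrow> chord a t' \<in> interior K"
    using chord_interior_nearby int by blast
  show ?thesis
  proof (cases "0 < w \<bullet> arc_direction a")
    case True
    define t' where "t' = t + min (\<delta>/2) ((1 - t)/2)"
    have t': "t' \<in> {0..1}" "t < t'" "\<bar>t' - t\<bar> < \<delta>"
      using t \<delta>(1) by (auto simp: t'_def min_def field_simps)
    then show ?thesis
      using that gnomonic_chord_less[OF pos[OF int] pos[OF \<delta>(2)] _ True] \<delta>(2) by blast
  next
    case False
    then have "0 < (- w) \<bullet> arc_direction a" using w by simp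
    define t' where "t' = t - min (\<delta>/2) (t/2)"
    have t': "t' \<in> {0..1}" "t' < t" "\<bar>t' - t\<bar> < \<delta>"
      using t \<delta>(1) by (auto simp: t'_def min_def field_simps)
    then show ?thesis
      using that gnomonic_chord_less[OF pos[OF \<delta>(2)] pos[OF int] _ \<open>0 < (- w) \<bullet> arc_direction a\<close>]
        \<delta>(2)
      by fastforce
  qed
qed

definition hull_params :: "arc \<Rightarrow> real set" where
  "hull_params a = {t \<in> {0..1}. chord a t \<in> K}"

definition arc_peak :: "real^3 \<Rightarrow> arc \<Rightarrow> real \<Rightarrow> bool" where
  "arc_peak w a t \<longleftrightarrow> t \<in> hull_params a \<and>
     (\<forall>s\<in>hull_params a. w \<bullet> gnomonic (chord a s) \<le> w \<bullet> gnomonic (chord a t))"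

lemma arc_peak_exists:
  assumes "a \<in> D" "hull_params a \<noteq> {}"
  shows "\<exists>t. arc_peak w a t"
proof -
  have "closed (chord a -` K)"
    by (simp add: continuous_closed_vimage closed_K isCont_chord)
  moreover have "hull_params a = {0..1} \<inter> chord a -` K" by (auto simp: hull_params_def)
  ultimately have "compact (hull_params a)" by (simp add: compact_Int_closed)
  moreover have "u0 \<bullet> chord a t \<noteq> 0" if "t \<in> hull_params a" for t
    using inner_u0_pos chord_nonzero valid_arc_D assms(1) that by (fastforce simp: hull_params_def)
  then have "continuous_on (hull_params a) (\<lambda>t. w \<bullet> gnomonic (chord a t))"
    unfolding gnomonic_def chord_def by (intro continuous_intros) auto
  ultimately show ?thesis
    using continuous_attains_sup[OF _ assms(2)] by (auto simp: arc_peak_def)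
qed

lemma hull_params_if_reachable_at: "reachable_at a t \<Longrightarrow> t \<in> hull_params a"
  using reachable_at_interior[of a t] interior_subset[of K]
  unfolding hull_params_def reachable_at_def by blast

lemma interior_peak_blocked:
  assumes "reachable_at a t0" "w \<bullet> arc_direction a \<noteq> 0" "arc_peak w a ts" "chord a ts \<in> interior K"
  shows "ts \<in> {0, 1}"
    and "\<exists>b s. s \<in> {0<..<1} \<and> reachable_at b s \<and> sgn (chord b s) = sgn (chord a ts)"
proof -
  have a: "a \<in> D" "ts \<in> {0..1}"
    using assms(1,3) by (auto simp: reachable_at_def arc_peak_def hull_params_def)
  show ts: "ts \<in> {0, 1}"
  proof (rule ccontr)
    assume "ts \<notin> {0, 1}"
    then obtain t' where "t' \<in> {0..1}" "chord a t' \<in> interior K"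
      "w \<bullet> gnomonic (chord a ts) < w \<bullet> gnomonic (chord a t')"
      using gnomonic_increase_inside[OF a(1) _ assms(4,2)] a(2) by force
    then show False using assms(3) interior_subset by (force simp: arc_peak_def hull_params_def)
  qed
  have va: "valid_arc a" using valid_arc_D[OF a(1)] .
  have "sgn (chord a ts) \<in> {fst a, snd a}" using ts va by auto
  then obtain b where b: "b \<in> D" "sgn (chord a ts) \<in> arc_relint b"
    using endpoint_blocked[OF a(1)] by blast
  moreover have "fst b \<noteq> snd b" using valid_arc_D[OF b(1)] by (simp add: valid_arc_def)
  ultimately obtain s where s: "s \<in> {0<..<1}" "sgn (chord a ts) = sgn (chord b s)"
    using arc_relint_chord by blast
  have "reachable_at a ts" using reachable_at_along_arc[OF assms(1) a(2) assms(4)] .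
  then have "reachable_at b s" using b(1) s by (auto simp: reachable_at_def)
  then show "\<exists>b s. s \<in> {0<..<1} \<and> reachable_at b s \<and> sgn (chord b s) = sgn (chord a ts)"
    using s by metis
qed

lemma highest_reachable_peak:
  assumes "reachable_at az tz"
  obtains am t0 ts where "reachable_at am t0" "arc_peak w am ts"
    "\<And>b s t. reachable_at b s \<Longrightarrow> t \<in> hull_params b \<Longrightarrow>
       w \<bullet> gnomonic (chord b t) \<le> w \<bullet> gnomonic (chord am ts)"
proof -
  define RA where "RA = {a. \<exists>t. reachable_at a t}"
  have "finite RA" using finite_D by (auto simp: RA_def reachable_at_def intro: rev_finite_subset)
  have "\<exists>t. arc_peak w a t" if "a \<in> RA" for a
    using that arc_peak_exists hull_params_if_reachable_at
    by (fastforce simp: RA_def reachable_at_def)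
  then obtain peak where peak: "\<And>a. a \<in> RA \<Longrightarrow> arc_peak w a (peak a)" by metis
  define val where "val a = w \<bullet> gnomonic (chord a (peak a))" for a
  have "az \<in> RA" using assms by (auto simp: RA_def)
  then obtain am where am: "am \<in> RA" "val am = Max (val ` RA)"
    using Max_in[of "val ` RA"] \<open>finite RA\<close> by fastforce
  then obtain t0 where "reachable_at am t0" by (auto simp: RA_def)
  moreover have "w \<bullet> gnomonic (chord b t) \<le> val am"
    if "reachable_at b s" "t \<in> hull_params b" for b s t
  proof -
    have "b \<in> RA" using that(1) by (auto simp: RA_def)
    then have "w \<bullet> gnomonic (chord b t) \<le> val b"
      using peak that(2) by (simp add: arc_peak_def val_def)
    also have "\<dots> \<le> val am" using am(2) \<open>finite RA\<close> \<open>b \<in> RA\<close> by simp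
    finally show ?thesis .
  qed
  ultimately show ?thesis using that peak[OF am(1)] by (simp add: val_def)
qed

lemma generic_thrust_beyond:
  assumes generic: "\<And>a. a \<in> D \<Longrightarrow> arc_direction a \<noteq> 0 \<Longrightarrow> w \<bullet> arc_direction a \<noteq> 0"
    and start: "reachable_at az tz"
  shows "\<exists>a y. a \<in> D \<and> thrusts a H y \<and> int_connected D H x y
           \<and> w \<bullet> gnomonic (chord az tz) \<le> w \<bullet> gnomonic y"
proof -
  obtain am t0 ts where t0: "reachable_at am t0" and peak: "arc_peak w am ts"
    and highest: "\<And>b s t. reachable_at b s \<Longrightarrow> t \<in> hull_params b \<Longrightarrow>
       w \<bullet> gnomonic (chord b t) \<le> w \<bullet> gnomonic (chord am ts)"
    using highest_reachable_peak[OF start] by blast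
  have am: "am \<in> D" "ts \<in> {0..1}" "chord am ts \<in> K"
    using t0 peak by (auto simp: reachable_at_def arc_peak_def hull_params_def)
  have "chord am ts \<notin> interior K"
  proof
    assume int: "chord am ts \<in> interior K"
    have "w \<bullet> arc_direction am \<noteq> 0"
      using generic[OF am(1)] arc_direction_nonzero[OF valid_arc_D[OF am(1)] am(3)] by blast
    then obtain b s where b: "s \<in> {0<..<1}" "reachable_at b s" "sgn (chord b s) = sgn (chord am ts)"
      using interior_peak_blocked(2)[OF t0 _ peak int] by blast
    have "b \<in> D" "chord b s \<in> interior K"
      using b(2) reachable_at_interior by (auto simp: reachable_at_def)
    moreover have "w \<bullet> arc_direction b \<noteq> 0"
      using generic arc_direction_nonzero valid_arc_D calculation interior_subset by blast
    ultimately obtain t' where t': "t' \<in> {0..1}" "chord b t' \<in> interior K"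
      "w \<bullet> gnomonic (chord b s) < w \<bullet> gnomonic (chord b t')"
      using gnomonic_increase_inside b(1) by blast
    have "w \<bullet> gnomonic (chord b t') \<le> w \<bullet> gnomonic (chord am ts)"
      using highest[OF b(2)] t'(1,2) interior_subset by (force simp: hull_params_def)
    also have "\<dots> = w \<bullet> gnomonic (chord b s)" using b(3) gnomonic_sgn by metis
    finally show False using t'(3) by simp
  qed
  then have "thrusts am H (sgn (chord am ts))"
    using thrusts_chord[OF am(1,2)] am(3) reachable_at_interior[OF t0] t0
    by (auto simp: frontier_K_iff reachable_at_def)
  moreover have "int_connected D H x (sgn (chord am ts))"
    using int_connected_along_arc[OF t0 am(2,3)] .
  moreover have "w \<bullet> gnomonic (chord az tz) \<le> w \<bullet> gnomonic (sgn (chord am ts))"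
    using highest[OF start hull_params_if_reachable_at[OF start]] by (simp add: gnomonic_sgn)
  ultimately show ?thesis using am(1) by blast
qed

lemma thrust_beyond:
  assumes "open W" "W \<noteq> {}" "reachable z"
  shows "\<exists>w\<in>W. \<exists>a y. a \<in> D \<and> thrusts a H y \<and> int_connected D H x y
           \<and> w \<bullet> gnomonic z \<le> w \<bullet> gnomonic y"
proof -
  obtain az tz where start: "reachable_at az tz" "z = sgn (chord az tz)"
    using reachable_imp_reachable_at[OF assms(3)] by blast
  obtain w where "w \<in> W" "\<forall>d\<in>arc_direction ` D. d \<noteq> 0 \<longrightarrow> w \<bullet> d \<noteq> 0"
    using open_avoids_hyperplanes[OF _ assms(1,2)] finite_D by blast
  then show ?thesis
    using generic_thrust_beyond[OF _ start(1), of w] start(2) by (auto simp: gnomonic_sgn)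
qed

lemma reachable_arc_in_plane:
  assumes plane: "\<And>z. reachable z \<Longrightarrow> n \<bullet> z = 0" and t0: "reachable_at a t0"
  shows "n \<bullet> fst a = 0 \<and> n \<bullet> snd a = 0"
proof -
  have chord_plane: "(1 - t) * (n \<bullet> fst a) + t * (n \<bullet> snd a) = 0" if "reachable_at a t" for t
  proof -
    have "n \<bullet> sgn (chord a t) = 0" using plane that by (simp add: reachable_at_def)
    moreover have "chord a t \<noteq> 0"
      using chord_nonzero valid_arc_D that by (auto simp: reachable_at_def)
    ultimately show ?thesis by (simp add: sgn_div_norm chord_def inner_add_right)
  qed
  have "t0 \<in> {0..1}" using t0 by (simp add: reachable_at_def)
  then obtain t' where t': "t' \<in> {0..1}" "t' \<noteq> t0" "chord a t' \<in> interior K"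
    using other_interior_param reachable_at_interior[OF t0] by blast
  have "(t' - t0) * (n \<bullet> snd a - n \<bullet> fst a) = 0"
    using chord_plane[OF t0] chord_plane[OF reachable_at_along_arc[OF t0 t'(1,3)]]
    by (simp add: algebra_simps)
  then have "n \<bullet> snd a = n \<bullet> fst a" using t'(2) by simp
  then show ?thesis using chord_plane[OF t0] by (simp add: algebra_simps)
qed

lemma planar_peak_outside_interior:
  assumes plane: "\<And>z. reachable z \<Longrightarrow> n \<bullet> z = 0" and "n \<noteq> 0"
    and t0: "reachable_at a t0" and w: "w \<bullet> arc_direction a \<noteq> 0" and peak: "arc_peak w a ts"
  shows "chord a ts \<notin> interior K"
proof
  assume int: "chord a ts \<in> interior K"
  obtain b s where b: "s \<in> {0<..<1}" "reachable_at b s" "sgn (chord b s) = sgn (chord a ts)"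
    using interior_peak_blocked(2)[OF t0 w peak int] by blast
  have a: "a \<in> D" "valid_arc a" using t0 valid_arc_D by (auto simp: reachable_at_def)
  have "b \<in> D" "valid_arc b" using b(2) valid_arc_D by (auto simp: reachable_at_def)
  have e: "sgn (chord a ts) \<in> {fst a, snd a}"
    using interior_peak_blocked(1)[OF t0 w peak int] a(2) by auto
  moreover have "sgn (chord a ts) \<in> arc_relint b"
    using b(1,3) arc_relint_chord \<open>valid_arc b\<close> by (force simp: valid_arc_def)
  ultimately have "arc_relint b \<inter> arc_relint a \<noteq> {}"
    using arc_relint_meet_if_cocircular[OF \<open>valid_arc b\<close> a(2) \<open>n \<noteq> 0\<close>]
      reachable_arc_in_plane[OF plane b(2)] reachable_arc_in_plane[OF plane t0] by blast
  then have "b = a" using arc_eq_if_relint_meet \<open>b \<in> D\<close> a(1) by blast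
  then show False
    using e \<open>sgn (chord a ts) \<in> arc_relint b\<close> endpoints_notin_arc_relint[OF a(2)] by auto
qed

text \<open>Otherwise all reachable arcs lie on one great circle; an endpoint of the arc through \<open>x\<close>
  cannot then be blocked inside the hull, since the blocking arc would overlap it. Hence both
  extreme points of that arc in \<open>K\<close> lie on the boundary, against \<open>chord_frontier_unique\<close>.\<close>
lemma reachable_off_plane:
  assumes "n \<noteq> 0"
  shows "\<exists>z. reachable z \<and> n \<bullet> z \<noteq> 0"
proof (rule ccontr)
  assume "\<not> ?thesis"
  then have plane: "\<And>z. reachable z \<Longrightarrow> n \<bullet> z = 0" by blast
  obtain a t0 where t0: "reachable_at a t0"
    using reachable_imp_reachable_at[OF reachable_x] by blast
  have a: "a \<in> D" "t0 \<in> hull_params a" "chord a t0 \<in> interior K"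
    using t0 hull_params_if_reachable_at reachable_at_interior by (auto simp: reachable_at_def)
  define w where "w = arc_direction a"
  have "w \<noteq> 0"
    using arc_direction_nonzero[OF valid_arc_D[OF a(1)]] a(3) interior_subset by (auto simp: w_def)
  obtain tM tm where peaks: "arc_peak w a tM" "arc_peak (- w) a tm"
    using arc_peak_exists[OF a(1)] a(2) by blast
  have "w \<bullet> arc_direction a \<noteq> 0" "(- w) \<bullet> arc_direction a \<noteq> 0"
    using \<open>w \<noteq> 0\<close> by (simp_all add: w_def)
  then have "chord a tM \<notin> interior K" "chord a tm \<notin> interior K"
    using planar_peak_outside_interior[OF plane assms t0] peaks by blast+
  moreover have "chord a tM \<in> K" "chord a tm \<in> K"
    using peaks by (auto simp: arc_peak_def hull_params_def)
  ultimately have "chord a tM \<in> frontier K" "chord a tm \<in> frontier K"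
    by (simp_all add: frontier_K_iff)
  then have "tM = tm"
    using chord_frontier_unique[OF a(1) _ _ _ _ a(3)] peaks
    by (auto simp: arc_peak_def hull_params_def)
  then have flat: "w \<bullet> gnomonic (chord a s) = w \<bullet> gnomonic (chord a tM)"
    if "s \<in> hull_params a" for s
    using peaks that by (force simp: arc_peak_def)
  have "t0 \<in> {0..1}" using t0 by (simp add: reachable_at_def)
  then obtain t' where t': "t' \<in> {0..1}" "t' \<noteq> t0" "chord a t' \<in> interior K"
    using other_interior_param a(3) by blast
  have pos: "0 < u0 \<bullet> chord a t" if "chord a t \<in> interior K" for t
    using inner_u0_pos interior_subset chord_nonzero valid_arc_D a(1) that by blast
  have "w \<bullet> gnomonic (chord a t0) \<noteq> w \<bullet> gnomonic (chord a t')"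
    using gnomonic_chord_less[OF pos pos, of t0 t' w] gnomonic_chord_less[OF pos pos, of t' t0 w]
      a(3) t'(2,3) \<open>w \<noteq> 0\<close> by (force simp: w_def)
  then show False using flat a(2) t' interior_subset by (force simp: hull_params_def)
qed

lemma thrust_avoiding:
  assumes "p \<in> H" "p \<noteq> x"
  shows "\<exists>a y. a \<in> D \<and> thrusts a H y \<and> int_connected D H x y \<and> y \<noteq> p"
proof -
  have "x \<in> H" using x_interior by (simp add: sph_interior_def)
  then have "gnomonic x - gnomonic p \<noteq> 0" using inj_on_gnomonic_H assms by (auto dest: inj_onD)
  then have "{w. 0 < (gnomonic x - gnomonic p) \<bullet> w} \<noteq> {}"
    by (auto intro!: exI[of _ "gnomonic x - gnomonic p"])
  then obtain w a y where "0 < (gnomonic x - gnomonic p) \<bullet> w" "a \<in> D" "thrusts a H y"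
    "int_connected D H x y" "w \<bullet> gnomonic x \<le> w \<bullet> gnomonic y"
    using thrust_beyond[OF open_halfspace_gt _ reachable_x] by blast
  moreover from calculation have "y \<noteq> p" by (auto simp: inner_diff_right inner_commute)
  ultimately show ?thesis by blast
qed

lemma thrust_off_plane:
  assumes "n \<noteq> 0"
  shows "\<exists>a y. a \<in> D \<and> thrusts a H y \<and> int_connected D H x y \<and> n \<bullet> y \<noteq> 0"
proof -
  obtain z where z: "reachable z" "n \<bullet> z \<noteq> 0" using reachable_off_plane[OF assms] by blast
  define n' where "n' = sgn (n \<bullet> z) *\<^sub>R n"
  have "z \<in> sph_interior H" using z(1) path_component_mem(2) unfolding reachable_def by blast
  then have "z \<in> S2" "z \<in> interior K"
    using sph_interior_H_iff by (auto simp: sph_interior_def H_eq)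
  moreover have "z \<noteq> 0" using \<open>z \<in> S2\<close> by (auto simp: mem_S2_iff)
  ultimately have zK: "z \<in> K" "0 < u0 \<bullet> z" using interior_subset inner_u0_pos by auto
  have "0 < n' \<bullet> gnomonic z"
    using z(2) zK(2) by (cases "0 < n \<bullet> z") (auto simp: n'_def gnomonic_def sgn_if mult_pos_neg)
  then obtain r where r: "r > 0" "\<And>w y. w \<in> ball n' r \<Longrightarrow> y \<in> K \<Longrightarrow>
      w \<bullet> gnomonic z \<le> w \<bullet> gnomonic y \<Longrightarrow> 0 < n' \<bullet> gnomonic y"
    using gnomonic_order_stable[OF zK(1)] by blast
  obtain w a y where "w \<in> ball n' r" "a \<in> D" "thrusts a H y" "int_connected D H x y"
    "w \<bullet> gnomonic z \<le> w \<bullet> gnomonic y"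
    using thrust_beyond[OF open_ball _ z(1), of n' r] r(1) by auto
  moreover from calculation have "y \<in> K"
    using sph_boundary_H frontier_K_iff by (auto simp: thrusts_def)
  ultimately have "0 < n' \<bullet> gnomonic y" using r(2) by blast
  then have "n \<bullet> y \<noteq> 0" by (auto simp: n'_def gnomonic_def)
  then show ?thesis using \<open>a \<in> D\<close> \<open>thrusts a H y\<close> \<open>int_connected D H x y\<close> by blast
qed

lemma three_thrusts:
  "\<exists>a1 a2 a3 y1 y2 y3. a1 \<in> D \<and> a2 \<in> D \<and> a3 \<in> D \<and> distinct [a1, a2, a3] \<and> distinct [y1, y2, y3] \<and>
     thrusts a1 H y1 \<and> thrusts a2 H y2 \<and> thrusts a3 H y3 \<and>
     \<not> (\<exists>E. sph_edge H E \<and> y1 \<in> E \<and> y2 \<in> E \<and> y3 \<in> E) \<and>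
     int_connected D H x y1 \<and> int_connected D H x y2 \<and> int_connected D H x y3"
proof -
  obtain a1 y1 where 1: "a1 \<in> D" "thrusts a1 H y1" "int_connected D H x y1"
    using thrust_beyond[of UNIV x] reachable_x by auto
  have H1: "y1 \<in> H" "y1 \<noteq> x"
    using 1(2) x_interior sph_boundary_H sph_interior_H_iff
    by (auto simp: thrusts_def H_eq frontier_K_iff)
  then obtain a2 y2 where 2: "a2 \<in> D" "thrusts a2 H y2" "int_connected D H x y2" "y2 \<noteq> y1"
    using thrust_avoiding by blast
  have "y2 \<in> H" using 2(2) sph_boundary_H by (auto simp: thrusts_def H_eq frontier_K_iff)
  then have "y1 \<times> y2 \<noteq> 0" using cross_nonzero_H H1(1) 2(4) by auto
  then obtain a3 y3 where 3: "a3 \<in> D" "thrusts a3 H y3" "int_connected D H x y3"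
    "(y1 \<times> y2) \<bullet> y3 \<noteq> 0"
    using thrust_off_plane by blast
  have "y3 \<noteq> y1" "y3 \<noteq> y2" using 3(4) by (auto simp: dot_cross_self)
  then have "a1 \<noteq> a2" "a1 \<noteq> a3" "a2 \<noteq> a3"
    using thrusts_unique 1(1,2) 2(1,2,4) 3(1,2) by metis+
  with 1 2 3 \<open>y3 \<noteq> y1\<close> \<open>y3 \<noteq> y2\<close> no_common_edge_if_not_coplanar[OF 3(4)] show ?thesis
    by (intro exI[of _ a1] exI[of _ a2] exI[of _ a3] exI[of _ y1] exI[of _ y2] exI[of _ y3]) auto
qed

end

lemma mem_or_uminus_mem_if_card_eq:
  fixes P A :: "'a::ab_group_add set"
  assumes "finite P" "card A = card P" "A \<subseteq> P \<union> uminus ` P" "\<forall>a\<in>A. - a \<notin> A" "p \<in> P"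
  shows "p \<in> A \<or> - p \<in> A"
proof (rule ccontr)
  assume avoid: "\<not> (p \<in> A \<or> - p \<in> A)"
  define g where "g = (\<lambda>z. if z \<in> P then z else - z)"
  have "g ` A \<subseteq> P - {p}"
    using assms(3) avoid by (auto simp: g_def)
  moreover have "inj_on g A"
    using assms(4) unfolding inj_on_def g_def by (metis minus_minus)
  ultimately have "card A \<le> card (P - {p})"
    using card_inj_on_le[of g A "P - {p}"] assms(1) by simp
  also have "\<dots> < card P" using card_Diff1_less[OF assms(1,5)] .
  finally show False using assms(2) by simp
qed

lemma hull_diagram_if_attractor:
  assumes oriented: "k_oriented_by k D P f" and attr: "attractor k P A"
    and "sph_hull A \<noteq> S2" and "a0 \<in> D" "x \<in> arc_set a0" and "x \<in> sph_interior (sph_hull A)"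
  obtains u0 where "hull_diagram A u0 D x"
proof -
  have P: "spherical_diagram D" "P \<subseteq> S2" "finite P" "card P = k"
    and f: "\<And>a. a \<in> D \<Longrightarrow> f a \<in> P \<and> (\<exists>u. u \<noteq> 0 \<and> u \<bullet> f a = 0 \<and> (\<forall>z\<in>arc_set a. u \<bullet> z = 0)) \<and>
        f a \<notin> arc_set a \<and> - f a \<notin> arc_set a"
    using oriented by (auto simp: k_oriented_by_def)
  have A: "A \<subseteq> P \<union> uminus ` P" "finite A" "card A = k" "\<forall>c\<in>A. - c \<notin> A"
    using attr by (auto simp: attractor_def)
  obtain u0 where u0: "\<forall>c\<in>A. 0 < u0 \<bullet> c"
    using assms(3) by (auto simp: sph_hull_def split: if_splits)
  have "A \<noteq> {}"
    using assms(6) by (auto simp: sph_hull_def sph_interior_def)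
  moreover have "A \<subseteq> S2"
    using A(1) P(2) by (auto simp: mem_S2_iff subset_iff)
  moreover have "\<exists>c\<in>A. c \<notin> arc_set a \<and> (\<exists>u. u \<noteq> 0 \<and> u \<bullet> c = 0 \<and> (\<forall>z\<in>arc_set a. u \<bullet> z = 0))"
    if "a \<in> D" for a
    using mem_or_uminus_mem_if_card_eq[OF P(3) _ A(1,4)] P(4) A(3) f[OF that] by force
  ultimately have "hull_diagram A u0 D x"
    using A(2) u0 P(1) assms(4-6) by unfold_locales auto
  then show thesis by (rule that)
qed

theorem mainTheorem18:
  fixes k :: nat and D :: "arc set" and P A :: "(real^3) set" and f :: "arc \<Rightarrow> real^3"
    and a0 :: arc and x :: "real^3"
  assumes "k_oriented_by k D P f"
    and "attractor k P A"
    and "sph_hull A \<noteq> S2"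
    and "a0 \<in> D" and "x \<in> arc_set a0" and "x \<in> sph_interior (sph_hull A)"
  shows "\<exists>a1 a2 a3 y1 y2 y3.
           a1 \<in> D \<and> a2 \<in> D \<and> a3 \<in> D \<and> distinct [a1, a2, a3] \<and> distinct [y1, y2, y3] \<and>
           thrusts a1 (sph_hull A) y1 \<and> thrusts a2 (sph_hull A) y2 \<and> thrusts a3 (sph_hull A) y3 \<and>
           \<not> (\<exists>E. sph_edge (sph_hull A) E \<and> y1 \<in> E \<and> y2 \<in> E \<and> y3 \<in> E) \<and>
           int_connected D (sph_hull A) x y1 \<and> int_connected D (sph_hull A) x y2 \<and>
           int_connected D (sph_hull A) x y3"
proof -
  obtain u0 where "hull_diagram A u0 D x"
    using hull_diagram_if_attractor[OF assms] .
  then show ?thesis by (rule hull_diagram.three_thrusts)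
qed

end
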